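(* Let $(\hat{x}_i,\hat{a}_i,\hat{y}_i)$, $i=1,\dots,N$, be samples in $\mathbb{R}^n\times\{0,1\}\times\mathbb{R}$ with empirical distribution $\hat{\mathbb{P}}^N$ and empirical marginals $\hat{p}^N_a=\frac1N\#\{i:\hat{a}_i=a\}>0$. Let $\mathcal{R}(x)=\rho^Tx+\sigma$ with $\rho\in\mathbb{R}^n\setminus\{0\}$, $\sigma\in\mathbb{R}$, let $d(y,\hat{y})=\hat{y}$, and let $\lambda(a)=(\hat{p}^N_1)^{-1}\mathbb{1}_{a=1}-(\hat{p}^N_0)^{-1}\mathbb{1}_{a=0}$, so that $\phi(x,a,y)=\lambda(a)\mathcal{R}(x)$. Let $\alpha=1$, $\beta\ge0$, $c((x,a,y),(x',a',y'))=\|x-x'\|+\infty\cdot|a-a'|+\beta|y-y'|$ (with $\infty\cdot 0=0$), $W_c^2(\mathbb{P},\mathbb{Q})=\inf_{\pi\in\Pi(\mathbb{P},\mathbb{Q})}\mathbb{E}_\pi[c^2]$, and $$\mathcal{T}=\inf\Big\{W_c^2(\hat{\mathbb{P}}^N,\mathbb{Q}):\ \mathbb{E}_{\mathbb{Q}}[\phi(X,A,Y)]=0,\ \mathbb{Q}(A=a)=\hat{p}^N_a\ \forall a\Big\}.$$ Then $$\mathcal{T}=\frac{\big(\sum_{i=1}^N\lambda(\hat{a}_i)(\rho^T\hat{x}_i+\sigma)\big)^2}{N\|\rho\|^2\sum_{i=1}^N\lambda(\hat{a}_i)^2}.$$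
   Context: $\|\cdot\|$ is the Euclidean norm; $\Pi(\mathbb{P},\mathbb{Q})$ is the set of couplings; the infimum is over probability distributions $\mathbb{Q}$ on $\mathbb{R}^n\times\{0,1\}\times\mathbb{R}$. This is the squared Wasserstein projection onto the set of distributions under which the linear regressor satisfies the equal-mean fairness criterion $\mathbb{E}[\mathcal{R}(X)\mid A=0]=\mathbb{E}[\mathcal{R}(X)\mid A=1]$ (with empirical group weights). *)

theory Defs
  imports "HOL-Probability.Probability"
begin

text \<open>Samples live in R^n x {0,1} x R, modelled as (real^'n) x bool x real
 (True = group 1, False = group 0), with the Borel sigma-algebra (discrete on bool).\<close>

type_synonym ('n) sample = "(real^('n::finite)) \<times> bool \<times> real"

definition couplings :: "'a measure \<Rightarrow> 'b measure \<Rightarrow> ('a \<times> 'b) measure set" where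
  "couplings P Q = {\<pi>. prob_space \<pi> \<and> sets \<pi> = sets (P \<Otimes>\<^sub>M Q) \<and>
       distr \<pi> P fst = P \<and> distr \<pi> Q snd = Q}"

definition cost_sq :: "real \<Rightarrow> ('n::finite) sample \<Rightarrow> ('n::finite) sample \<Rightarrow> ennreal" where
  "cost_sq \<beta> z z' = (case z of (x,a,y) \<Rightarrow> case z' of (x',a',y') \<Rightarrow>
      if a = a' then ennreal ((norm (x - x') + \<beta> * \<bar>y - y'\<bar>)^2) else \<infinity>)"

definition Wc_sq :: "real \<Rightarrow> ('n::finite) sample measure \<Rightarrow> ('n::finite) sample measure \<Rightarrow> ennreal" where
  "Wc_sq \<beta> P Q = (INF \<pi>\<in>couplings P Q. \<integral>\<^sup>+ w. cost_sq \<beta> (fst w) (snd w) \<partial>\<pi>)"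

definition emp_dist :: "nat \<Rightarrow> (nat \<Rightarrow> real^('n::finite)) \<Rightarrow> (nat \<Rightarrow> bool) \<Rightarrow> (nat \<Rightarrow> real)
     \<Rightarrow> ('n::finite) sample measure" where
  "emp_dist N xh ah yh =
     distr (uniform_count_measure {..<N}) borel (\<lambda>i. (xh i, ah i, yh i))"

definition emp_marg :: "nat \<Rightarrow> (nat \<Rightarrow> bool) \<Rightarrow> bool \<Rightarrow> real" where
  "emp_marg N ah a = real (card {i\<in>{..<N}. ah i = a}) / real N"

definition lam :: "nat \<Rightarrow> (nat \<Rightarrow> bool) \<Rightarrow> bool \<Rightarrow> real" where
  "lam N ah a = (if a then 1 / emp_marg N ah True else - (1 / emp_marg N ah False))"

definition phi :: "nat \<Rightarrow> (nat \<Rightarrow> bool) \<Rightarrow> real^('n::finite) \<Rightarrow> real \<Rightarrow> ('n::finite) sample \<Rightarrow> real" where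
  "phi N ah \<rho> \<sigma> z = (case z of (x,a,y) \<Rightarrow> lam N ah a * (\<rho> \<bullet> x + \<sigma>))"

definition proj_T :: "nat \<Rightarrow> (nat \<Rightarrow> real^('n::finite)) \<Rightarrow> (nat \<Rightarrow> bool) \<Rightarrow> (nat \<Rightarrow> real)
     \<Rightarrow> real^('n::finite) \<Rightarrow> real \<Rightarrow> real \<Rightarrow> ennreal" where
  "proj_T N xh ah yh \<rho> \<sigma> \<beta> =
     (INF Q\<in>{Q :: ('n::finite) sample measure. prob_space Q \<and> sets Q = sets borel \<and>
              integrable Q (phi N ah \<rho> \<sigma>) \<and> (\<integral>z. phi N ah \<rho> \<sigma> z \<partial>Q) = 0 \<and>
              (\<forall>a. measure Q {z. fst (snd z) = a} = emp_marg N ah a)}.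
        Wc_sq \<beta> (emp_dist N xh ah yh) Q)"

end

theory Submission
  imports Defs
begin

text \<open>A coupling of finite cost never moves mass between the two groups, so \<open>\<lambda>(a)\<close> takes the
  same value \<open>k\<close> at both ends of almost every transport pair, and the mean of \<open>k g\<close> with
  \<open>g = \<rho>\<^sup>T(x' - x)\<close> is \<open>E\<^sub>Q[\<phi>] - E\<^sub>P[\<phi>] = -E\<^sub>P[\<phi>]\<close>. Since \<open>g\<^sup>2 \<le> \<parallel>\<rho>\<parallel>\<^sup>2 c\<^sup>2\<close> and
  \<open>g\<^sup>2 \<ge> 2 t k g - t\<^sup>2 k\<^sup>2\<close> for every real \<open>t\<close>, integrating gives
  \<open>\<parallel>\<rho>\<parallel>\<^sup>2 E\<^sub>\<pi>[c\<^sup>2] \<ge> -2 t E\<^sub>P[\<phi>] - t\<^sup>2 E\<^sub>P[\<lambda>\<^sup>2]\<close>, and \<open>t = -E\<^sub>P[\<phi>] / E\<^sub>P[\<lambda>\<^sup>2]\<close> yields the lower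
  bound. It is attained by moving each sample point \<open>x\<^sub>i\<close> along \<open>\<rho>\<close> by a multiple of \<open>\<lambda>(a\<^sub>i)\<close>,
  which makes both inequalities equalities.\<close>

lemma measurable_sample_group [measurable]:
  "(\<lambda>z::'n::finite sample. fst (snd z)) \<in> measurable borel (count_space UNIV)"
proof -
  have "(\<lambda>z::'n sample. fst (snd z)) \<in> borel_measurable borel"
    by (intro borel_measurable_continuous_onI continuous_intros)
  then show ?thesis
    by (metis sets_borel_eq_count_space measurable_cong_sets)
qed

lemma measurable_sample_features [measurable]:
  "(\<lambda>z::'n::finite sample. fst z) \<in> borel_measurable borel"
  by (intro borel_measurable_continuous_onI continuous_intros)

lemma measurable_sample_outcome [measurable]:
  "(\<lambda>z::'n::finite sample. snd (snd z)) \<in> borel_measurable borel"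
  by (intro borel_measurable_continuous_onI continuous_intros)

lemma cost_sq_measurable [measurable]:
  "(\<lambda>w::'n::finite sample \<times> 'n sample. cost_sq \<beta> (fst w) (snd w)) \<in> borel_measurable (borel \<Otimes>\<^sub>M borel)"
  unfolding cost_sq_def by (simp add: case_prod_beta) measurable

lemma phi_eq: "phi N ah \<rho> \<sigma> z = lam N ah (fst (snd z)) * (\<rho> \<bullet> fst z + \<sigma>)"
  by (simp add: phi_def case_prod_beta)

lemma measurable_uniform_count_measure:
  assumes "space M = UNIV"
  shows "g \<in> measurable (uniform_count_measure A) M"
  using assms by (simp add: measurable_cong_sets[OF sets_uniform_count_measure_count_space refl])

lemma integrable_distr_uniform_count_measure:
  fixes f :: "'b::topological_space \<Rightarrow> real"
  assumes "finite A" "f \<in> borel_measurable borel"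
  shows "integrable (distr (uniform_count_measure A) borel g) f"
  using assms
  by (simp add: integrable_distr_eq measurable_uniform_count_measure uniform_count_measure_def
      integrable_point_measure_finite)

lemma integral_distr_uniform_count_measure:
  fixes f :: "'b::topological_space \<Rightarrow> real"
  assumes "finite A" "f \<in> borel_measurable borel"
  shows "integral\<^sup>L (distr (uniform_count_measure A) borel g) f = (\<Sum>i\<in>A. f (g i)) / card A"
  using assms
  by (simp add: integral_distr measurable_uniform_count_measure integral_uniform_count_measure)

lemma sets_emp_dist [simp]: "sets (emp_dist N xh ah yh) = sets borel"
  by (simp add: emp_dist_def)

lemma prob_space_emp_dist: "N > 0 \<Longrightarrow> prob_space (emp_dist N xh ah yh)"
  unfolding emp_dist_def
  by (intro prob_space.prob_space_distr prob_space_uniform_count_measure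
      measurable_uniform_count_measure) auto

lemma integrable_emp_dist:
  fixes f :: "'n::finite sample \<Rightarrow> real"
  assumes "f \<in> borel_measurable borel"
  shows "integrable (emp_dist N xh ah yh) f"
  unfolding emp_dist_def by (rule integrable_distr_uniform_count_measure) (simp_all add: assms)

lemma integral_emp_dist:
  fixes f :: "'n::finite sample \<Rightarrow> real"
  assumes "f \<in> borel_measurable borel"
  shows "integral\<^sup>L (emp_dist N xh ah yh) f = (\<Sum>i<N. f (xh i, ah i, yh i)) / N"
  unfolding emp_dist_def by (subst integral_distr_uniform_count_measure) (simp_all add: assms)

lemma measure_emp_dist_group:
  "measure (emp_dist N xh ah yh) {z. fst (snd z) = a} = emp_marg N ah a"
proof -
  have "measure (emp_dist N xh ah yh) {z. fst (snd z) = a}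
      = measure (uniform_count_measure {..<N}) {i\<in>{..<N}. ah i = a}"
    unfolding emp_dist_def
    by (subst measure_distr)
      (simp_all add: measurable_uniform_count_measure space_uniform_count_measure Collect_conj_eq
        Int_commute lessThan_def)
  also have "\<dots> = emp_marg N ah a"
    unfolding emp_marg_def by (subst measure_uniform_count_measure) (simp_all add: subset_iff)
  finally show ?thesis .
qed

lemma coupling_integral_fst:
  fixes f :: "'a \<Rightarrow> real"
  assumes "\<pi> \<in> couplings P Q" "f \<in> borel_measurable P" "integrable P f"
  shows "integrable \<pi> (\<lambda>w. f (fst w))" "integral\<^sup>L \<pi> (\<lambda>w. f (fst w)) = integral\<^sup>L P f"
proof -
  have "sets \<pi> = sets (P \<Otimes>\<^sub>M Q)" and marginal: "distr \<pi> P fst = P"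
    using assms(1) by (simp_all add: couplings_def)
  then have "fst \<in> measurable \<pi> P"
    using measurable_cong_sets[OF _ refl] measurable_fst by blast
  with assms(2,3) marginal show "integrable \<pi> (\<lambda>w. f (fst w))" "integral\<^sup>L \<pi> (\<lambda>w. f (fst w)) = integral\<^sup>L P f"
    by (metis integrable_distr_eq, metis integral_distr)
qed

lemma coupling_integral_snd:
  fixes f :: "'b \<Rightarrow> real"
  assumes "\<pi> \<in> couplings P Q" "f \<in> borel_measurable Q" "integrable Q f"
  shows "integrable \<pi> (\<lambda>w. f (snd w))" "integral\<^sup>L \<pi> (\<lambda>w. f (snd w)) = integral\<^sup>L Q f"
proof -
  have "sets \<pi> = sets (P \<Otimes>\<^sub>M Q)" and marginal: "distr \<pi> Q snd = Q"
    using assms(1) by (simp_all add: couplings_def)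
  then have "snd \<in> measurable \<pi> Q"
    using measurable_cong_sets[OF _ refl] measurable_snd by blast
  with assms(2,3) marginal show "integrable \<pi> (\<lambda>w. f (snd w))" "integral\<^sup>L \<pi> (\<lambda>w. f (snd w)) = integral\<^sup>L Q f"
    by (metis integrable_distr_eq, metis integral_distr)
qed

lemma AE_same_group_if_cost_finite:
  fixes \<pi> :: "('n::finite sample \<times> 'n sample) measure"
  assumes "sets \<pi> = sets (borel \<Otimes>\<^sub>M borel)"
    and "(\<integral>\<^sup>+ w. cost_sq \<beta> (fst w) (snd w) \<partial>\<pi>) \<noteq> \<infinity>"
  shows "AE w in \<pi>. fst (snd (fst w)) = fst (snd (snd w))"
proof -
  have "(\<lambda>w. cost_sq \<beta> (fst w) (snd w)) \<in> borel_measurable \<pi>"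
    using measurable_cong_sets[OF assms(1) refl] cost_sq_measurable by blast
  from nn_integral_PInf_AE[OF this assms(2)] show ?thesis
    by eventually_elim (auto simp: cost_sq_def split: prod.splits if_splits)
qed

lemma inner_sq_div_le_cost_sq:
  assumes "\<beta> \<ge> 0" and "fst (snd z) = fst (snd z')"
  shows "ennreal ((\<rho> \<bullet> (fst z' - fst z))\<^sup>2 / (norm \<rho>)\<^sup>2) \<le> cost_sq \<beta> z z'"
proof -
  obtain x a y x' y' where z: "z = (x, a, y)" "z' = (x', a, y')"
    using assms(2) by (cases z; cases z') auto
  have "(\<rho> \<bullet> (x' - x))\<^sup>2 \<le> (norm \<rho> * norm (x - x'))\<^sup>2"
    by (metis Cauchy_Schwarz_ineq2 abs_ge_zero norm_minus_commute power2_abs power_mono)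
  then have "(\<rho> \<bullet> (x' - x))\<^sup>2 / (norm \<rho>)\<^sup>2 \<le> (norm (x - x'))\<^sup>2"
    by (cases "\<rho> = 0") (simp_all add: divide_le_eq power_mult_distrib mult.commute)
  also have "\<dots> \<le> (norm (x - x') + \<beta> * \<bar>y - y'\<bar>)\<^sup>2"
    using assms(1) by (intro power_mono) auto
  finally show ?thesis
    by (simp add: z cost_sq_def ennreal_leI)
qed

lemma ennreal_integral_le_nn_integral:
  fixes f :: "'a \<Rightarrow> real"
  assumes "integrable M f" and "AE x in M. ennreal (f x) \<le> g x"
  shows "ennreal (integral\<^sup>L M f) \<le> integral\<^sup>N M g"
proof -
  have "ennreal (integral\<^sup>L M f) \<le> ennreal (\<integral>x. max 0 (f x) \<partial>M)"
    using assms(1) by (intro ennreal_leI integral_mono) auto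
  also have "\<dots> = (\<integral>\<^sup>+ x. ennreal (max 0 (f x)) \<partial>M)"
    using assms(1) by (intro nn_integral_eq_integral[symmetric]) auto
  also have "\<dots> = (\<integral>\<^sup>+ x. ennreal (f x) \<partial>M)"
    by (intro nn_integral_cong) (simp add: max_def ennreal_neg)
  also have "\<dots> \<le> integral\<^sup>N M g"
    using assms(2) by (intro nn_integral_mono_AE)
  finally show ?thesis .
qed

lemma coupling_cost_ge:
  fixes \<pi> :: "('n::finite sample \<times> 'n sample) measure" and h :: "bool \<Rightarrow> real"
    and \<rho> :: "real^'n" and \<sigma> :: real
  defines "R \<equiv> \<lambda>z::'n sample. h (fst (snd z)) * (\<rho> \<bullet> fst z + \<sigma>)"
    and "H \<equiv> \<lambda>z::'n sample. (h (fst (snd z)))\<^sup>2"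
  assumes \<pi>: "\<pi> \<in> couplings P Q" and "sets P = sets borel" and "sets Q = sets borel"
    and "integrable P R" and "integrable P H" and "integrable Q R" and "integral\<^sup>L Q R = 0"
    and "\<beta> \<ge> 0"
  shows "ennreal ((- 2 * t * integral\<^sup>L P R - t\<^sup>2 * integral\<^sup>L P H) / (norm \<rho>)\<^sup>2)
    \<le> (\<integral>\<^sup>+ w. cost_sq \<beta> (fst w) (snd w) \<partial>\<pi>)"
proof (cases "(\<integral>\<^sup>+ w. cost_sq \<beta> (fst w) (snd w) \<partial>\<pi>) = \<infinity>")
  case False
  have "sets \<pi> = sets (borel \<Otimes>\<^sub>M borel)"
    using \<pi> sets_pair_measure_cong[OF assms(4,5)] by (simp add: couplings_def)
  then have same_group: "AE w in \<pi>. fst (snd (fst w)) = fst (snd (snd w))"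
    using False by (rule AE_same_group_if_cost_finite)
  have "R \<in> borel_measurable borel" "H \<in> borel_measurable borel"
    unfolding R_def H_def by measurable
  then have "R \<in> borel_measurable P" "H \<in> borel_measurable P" "R \<in> borel_measurable Q"
    using measurable_cong_sets[OF assms(4) refl] measurable_cong_sets[OF assms(5) refl] by blast+
  note transfer = coupling_integral_fst[OF \<pi> this(1) assms(6)] coupling_integral_fst[OF \<pi> this(2) assms(7)]
    coupling_integral_snd[OF \<pi> this(3) assms(8)]
  define F where "F w = (2 * t * (R (snd w) - R (fst w)) - t\<^sup>2 * H (fst w)) / (norm \<rho>)\<^sup>2" for w
  have F_integrable: "integrable \<pi> F"
    unfolding F_def using transfer assms(6-8) by simp
  have F_integral: "integral\<^sup>L \<pi> F = (- 2 * t * integral\<^sup>L P R - t\<^sup>2 * integral\<^sup>L P H) / (norm \<rho>)\<^sup>2"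
    unfolding F_def using transfer assms(6-9) by (simp add: algebra_simps)
  have F_le_cost: "ennreal (F w) \<le> cost_sq \<beta> (fst w) (snd w)"
    if "fst (snd (fst w)) = fst (snd (snd w))" for w
  proof -
    define k where "k = h (fst (snd (fst w)))"
    define g where "g = \<rho> \<bullet> (fst (snd w) - fst (fst w))"
    have "F w = (2 * t * k * g - t\<^sup>2 * k\<^sup>2) / (norm \<rho>)\<^sup>2"
      unfolding F_def R_def H_def k_def g_def using that by (simp add: algebra_simps inner_diff_right)
    also have "\<dots> \<le> g\<^sup>2 / (norm \<rho>)\<^sup>2"
    proof (intro divide_right_mono)
      show "2 * t * k * g - t\<^sup>2 * k\<^sup>2 \<le> g\<^sup>2"
        using zero_le_power2[of "g - t * k"] by (simp add: power2_eq_square algebra_simps)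
    qed simp
    finally show ?thesis
      unfolding g_def using inner_sq_div_le_cost_sq[OF assms(10) that, of \<rho>]
      by (meson ennreal_leI order_trans)
  qed
  have "AE w in \<pi>. ennreal (F w) \<le> cost_sq \<beta> (fst w) (snd w)"
    using same_group by eventually_elim (rule F_le_cost)
  from ennreal_integral_le_nn_integral[OF F_integrable this] show ?thesis
    by (simp only: F_integral)
qed simp

lemma proj_T_ge:
  fixes \<rho> :: "real^'n::finite"
  assumes "\<beta> \<ge> 0"
  shows "ennreal ((\<Sum>i<N. lam N ah (ah i) * (\<rho> \<bullet> xh i + \<sigma>))\<^sup>2 /
      (real N * (norm \<rho>)\<^sup>2 * (\<Sum>i<N. (lam N ah (ah i))\<^sup>2))) \<le> proj_T N xh ah yh \<rho> \<sigma> \<beta>"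
    (is "ennreal (?S\<^sup>2 / (_ * ?L)) \<le> _")
proof -
  define R where "R = (\<lambda>z::'n sample. lam N ah (fst (snd z)) * (\<rho> \<bullet> fst z + \<sigma>))"
  define H where "H = (\<lambda>z::'n sample. (lam N ah (fst (snd z)))\<^sup>2)"
  have R_meas: "R \<in> borel_measurable borel" and H_meas: "H \<in> borel_measurable borel"
    unfolding R_def H_def by measurable
  let ?P = "emp_dist N xh ah yh"
  have P_integrals: "integral\<^sup>L ?P R = ?S / N" "integral\<^sup>L ?P H = ?L / N"
    by (simp_all add: integral_emp_dist R_meas H_meas) (simp_all add: R_def H_def)
  define t where "t = - (?S / N) / (?L / N)"
  \<comment> \<open>also when \<open>N = 0\<close> or \<open>?L = 0\<close>: then \<open>t = 0\<close> and both sides are \<open>0\<close>, as \<open>x / 0 = 0\<close>\<close>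
  have optimal_t: "(- 2 * t * (?S / N) - t\<^sup>2 * (?L / N)) / (norm \<rho>)\<^sup>2 = ?S\<^sup>2 / (N * (norm \<rho>)\<^sup>2 * ?L)"
    by (cases "N = 0 \<or> ?L = 0") (auto simp: t_def field_simps power2_eq_square)
  show ?thesis
    unfolding proj_T_def Wc_sq_def
  proof (intro INF_greatest, clarify)
    fix Q \<pi>
    assume Q: "prob_space Q" "sets Q = sets borel" "integrable Q (phi N ah \<rho> \<sigma>)"
      "(\<integral>z. phi N ah \<rho> \<sigma> z \<partial>Q) = 0" and \<pi>: "\<pi> \<in> couplings ?P Q"
    have "phi N ah \<rho> \<sigma> = R"
      by (simp add: fun_eq_iff phi_eq R_def)
    with Q have "integrable Q R" "integral\<^sup>L Q R = 0"
      by simp_all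
    moreover have "integrable ?P R" "integrable ?P H"
      using R_meas H_meas by (simp_all add: integrable_emp_dist)
    ultimately have "ennreal ((- 2 * t * integral\<^sup>L ?P R - t\<^sup>2 * integral\<^sup>L ?P H) / (norm \<rho>)\<^sup>2)
        \<le> (\<integral>\<^sup>+ w. cost_sq \<beta> (fst w) (snd w) \<partial>\<pi>)"
      unfolding R_def H_def by (intro coupling_cost_ge[OF \<pi> sets_emp_dist Q(2)] assms)
    then show "ennreal (?S\<^sup>2 / (N * (norm \<rho>)\<^sup>2 * ?L)) \<le> (\<integral>\<^sup>+ w. cost_sq \<beta> (fst w) (snd w) \<partial>\<pi>)"
      by (simp only: P_integrals optimal_t)
  qed
qed

lemma distr_pairs_in_couplings:
  fixes f :: "'i \<Rightarrow> 'a::topological_space" and g :: "'i \<Rightarrow> 'b::topological_space"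
  assumes "finite A" and "A \<noteq> {}"
  defines "U \<equiv> uniform_count_measure A"
  shows "distr U (borel \<Otimes>\<^sub>M borel) (\<lambda>i. (f i, g i)) \<in> couplings (distr U borel f) (distr U borel g)"
  unfolding couplings_def
proof (intro CollectI conjI)
  have pair_meas: "(\<lambda>i. (f i, g i)) \<in> measurable U (borel \<Otimes>\<^sub>M borel)"
    unfolding U_def by (simp add: measurable_uniform_count_measure space_pair_measure)
  show "prob_space (distr U (borel \<Otimes>\<^sub>M borel) (\<lambda>i. (f i, g i)))"
    unfolding U_def using assms(1,2)
    by (intro prob_space.prob_space_distr prob_space_uniform_count_measure
        measurable_uniform_count_measure) (simp_all add: space_pair_measure)
  show "sets (distr U (borel \<Otimes>\<^sub>M borel) (\<lambda>i. (f i, g i))) = sets (distr U borel f \<Otimes>\<^sub>M distr U borel g)"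
    by (simp add: sets_pair_measure_cong[OF sets_distr sets_distr])
  have "distr (distr U (borel \<Otimes>\<^sub>M borel) (\<lambda>i. (f i, g i))) (distr U borel f) fst
      = distr U (distr U borel f) (fst \<circ> (\<lambda>i. (f i, g i)))"
    using pair_meas measurable_cong_sets[OF refl sets_distr] by (intro distr_distr) auto
  also have "\<dots> = distr U borel f"
    by (intro distr_cong) auto
  finally show "distr (distr U (borel \<Otimes>\<^sub>M borel) (\<lambda>i. (f i, g i))) (distr U borel f) fst = distr U borel f" .
  have "distr (distr U (borel \<Otimes>\<^sub>M borel) (\<lambda>i. (f i, g i))) (distr U borel g) snd
      = distr U (distr U borel g) (snd \<circ> (\<lambda>i. (f i, g i)))"
    using pair_meas measurable_cong_sets[OF refl sets_distr] by (intro distr_distr) auto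
  also have "\<dots> = distr U borel g"
    by (intro distr_cong) auto
  finally show "distr (distr U (borel \<Otimes>\<^sub>M borel) (\<lambda>i. (f i, g i))) (distr U borel g) snd = distr U borel g" .
qed

lemma Wc_sq_emp_dist_le:
  assumes "N > 0"
  shows "Wc_sq \<beta> (emp_dist N xh ah yh) (emp_dist N xh' ah yh)
    \<le> ennreal ((\<Sum>i<N. (norm (xh i - xh' i))\<^sup>2) / N)"
proof -
  define U where "U = uniform_count_measure {..<N}"
  define z where "z i = (xh i, ah i, yh i)" for i
  define z' where "z' i = (xh' i, ah i, yh i)" for i
  define \<pi> where "\<pi> = distr U (borel \<Otimes>\<^sub>M borel) (\<lambda>i. (z i, z' i))"
  have coupling: "\<pi> \<in> couplings (emp_dist N xh ah yh) (emp_dist N xh' ah yh)"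
    unfolding \<pi>_def U_def emp_dist_def z_def z'_def
    using assms by (intro distr_pairs_in_couplings) auto
  have "(\<integral>\<^sup>+ w. cost_sq \<beta> (fst w) (snd w) \<partial>\<pi>) = (\<integral>\<^sup>+ i. cost_sq \<beta> (z i) (z' i) \<partial>U)"
    unfolding \<pi>_def U_def
    by (subst nn_integral_distr) (simp_all add: measurable_uniform_count_measure space_pair_measure)
  also have "\<dots> = (\<integral>\<^sup>+ i. ennreal ((norm (xh i - xh' i))\<^sup>2) \<partial>U)"
    by (simp add: z_def z'_def cost_sq_def)
  also have "\<dots> = ennreal (\<integral>i. (norm (xh i - xh' i))\<^sup>2 \<partial>U)"
    unfolding U_def uniform_count_measure_def
    by (intro nn_integral_eq_integral integrable_point_measure_finite) auto
  also have "\<dots> = ennreal ((\<Sum>i<N. (norm (xh i - xh' i))\<^sup>2) / N)"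
    by (simp add: U_def integral_uniform_count_measure)
  finally show ?thesis
    unfolding Wc_sq_def by (intro INF_lower2[OF coupling]) simp
qed

lemma proj_T_le:
  fixes \<rho> :: "real^'n::finite"
  assumes L_pos: "(\<Sum>i<N. (lam N ah (ah i))\<^sup>2) > 0" and "\<rho> \<noteq> 0"
  shows "proj_T N xh ah yh \<rho> \<sigma> \<beta> \<le> ennreal ((\<Sum>i<N. lam N ah (ah i) * (\<rho> \<bullet> xh i + \<sigma>))\<^sup>2 /
      (real N * (norm \<rho>)\<^sup>2 * (\<Sum>i<N. (lam N ah (ah i))\<^sup>2)))"
    (is "_ \<le> ennreal (?S\<^sup>2 / (_ * ?L))")
proof -
  have "N > 0"
    using L_pos by (cases N) auto
  have r2_pos: "(norm \<rho>)\<^sup>2 > 0"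
    using assms(2) by simp
  define c where "c a = lam N ah a * ?S / ((norm \<rho>)\<^sup>2 * ?L)" for a
  define xh' where "xh' i = xh i - c (ah i) *\<^sub>R \<rho>" for i
  let ?Q = "emp_dist N xh' ah yh"
  have phi_shifted: "phi N ah \<rho> \<sigma> (xh' i, ah i, yh i)
      = lam N ah (ah i) * (\<rho> \<bullet> xh i + \<sigma>) - (lam N ah (ah i))\<^sup>2 * (?S / ?L)" for i
    using r2_pos L_pos
    by (simp add: phi_eq xh'_def c_def inner_diff_right flip: power2_norm_eq_inner)
      (simp add: field_simps power2_eq_square)
  have phi_meas: "phi N ah \<rho> \<sigma> \<in> borel_measurable borel"
    unfolding phi_eq[abs_def] by measurable
  have "(\<Sum>i<N. phi N ah \<rho> \<sigma> (xh' i, ah i, yh i)) = 0"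
    using L_pos by (simp only: phi_shifted sum_subtractf flip: sum_distrib_right) simp
  then have "(\<integral>z. phi N ah \<rho> \<sigma> z \<partial>?Q) = 0"
    by (simp add: integral_emp_dist[OF phi_meas])
  then have feasible: "?Q \<in> {Q. prob_space Q \<and> sets Q = sets borel \<and>
      integrable Q (phi N ah \<rho> \<sigma>) \<and> (\<integral>z. phi N ah \<rho> \<sigma> z \<partial>Q) = 0 \<and>
      (\<forall>a. measure Q {z. fst (snd z) = a} = emp_marg N ah a)}"
    using \<open>N > 0\<close> L_pos
    by (simp add: prob_space_emp_dist integrable_emp_dist[OF phi_meas] measure_emp_dist_group)
  have "(norm (xh i - xh' i))\<^sup>2 = (lam N ah (ah i))\<^sup>2 * (?S\<^sup>2 / ((norm \<rho>)\<^sup>2 * ?L\<^sup>2))" for i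
    using r2_pos L_pos by (simp add: xh'_def c_def power_mult_distrib power_divide)
      (simp add: field_simps eval_nat_numeral)
  then have "(\<Sum>i<N. (norm (xh i - xh' i))\<^sup>2) = ?L * (?S\<^sup>2 / ((norm \<rho>)\<^sup>2 * ?L\<^sup>2))"
    by (simp only: flip: sum_distrib_right)
  then have "(\<Sum>i<N. (norm (xh i - xh' i))\<^sup>2) / N = ?S\<^sup>2 / (N * (norm \<rho>)\<^sup>2 * ?L)"
    using r2_pos L_pos by (simp add: field_simps power2_eq_square)
  then have "Wc_sq \<beta> (emp_dist N xh ah yh) ?Q \<le> ennreal (?S\<^sup>2 / (N * (norm \<rho>)\<^sup>2 * ?L))"
    using Wc_sq_emp_dist_le[OF \<open>N > 0\<close>, of \<beta> xh ah yh xh'] by metis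
  then show ?thesis
    unfolding proj_T_def by (rule INF_lower2[OF feasible])
qed

lemma lam_nonzero: "emp_marg N ah a > 0 \<Longrightarrow> lam N ah a \<noteq> 0"
  by (cases a) (simp_all add: lam_def)

theorem corollary1:
  fixes N :: nat and xh :: "nat \<Rightarrow> real^'n" and ah :: "nat \<Rightarrow> bool" and yh :: "nat \<Rightarrow> real"
    and \<rho> :: "real^'n" and \<sigma> \<beta> :: real
  assumes "\<forall>a. emp_marg N ah a > 0"
    and "\<rho> \<noteq> 0"
    and "\<beta> \<ge> 0"
  shows "proj_T N xh ah yh \<rho> \<sigma> \<beta> =
    ennreal ((\<Sum>i<N. lam N ah (ah i) * (\<rho> \<bullet> xh i + \<sigma>))^2 /
       (real N * (norm \<rho>)^2 * (\<Sum>i<N. (lam N ah (ah i))^2)))"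
proof -
  have "N > 0"
    using assms(1) by (cases N) (auto simp: emp_marg_def)
  moreover have "lam N ah a \<noteq> 0" for a
    using assms(1) by (simp add: lam_nonzero)
  ultimately have "(\<Sum>i<N. (lam N ah (ah i))\<^sup>2) > 0"
    by (intro sum_pos) auto
  then show ?thesis
    using proj_T_le[OF _ assms(2)] proj_T_ge[OF assms(3)] by (intro antisym)
qed

end
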